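(* Let $p,q$ be integers with $0\le p<q$ and let $n\ge 1$. Then $$\operatorname{Card}\{F_n^{p,q}\}=\sum_{k=0}^{\lfloor \frac{n-p}{q}\rfloor}\left[\binom{2n-(kq+p)-1}{n-1}-\binom{2n-(kq+p)-1}{n}\right].$$
   Context: A Dyck (Catalan) path of semilength $n$ is a lattice path from $(0,0)$ to $(2n,0)$ with steps $(1,1)$ and $(1,-1)$ that never goes below the $x$-axis. Its first rise is the length of its maximal initial run of $(1,1)$ steps. For integers $0\le p<q$, the set $F_n^{p,q}$ of generalized Fine sequences on $[n]$ congruous $q$ modulo $p$ is the set of Dyck paths of semilength $n$ whose first rise equals $kq+p$ for some integer $k\ge 0$. *)

theory Defs
  imports Complex_Main
begin

text \<open>A lattice path is encoded as a list of steps: True = up step (1,1),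
  False = down step (1,-1).\<close>

definition height :: "bool list \<Rightarrow> int" where
  "height xs = (\<Sum>s\<leftarrow>xs. if s then 1 else -1)"

definition dyck_path :: "nat \<Rightarrow> bool list \<Rightarrow> bool" where
  "dyck_path n xs \<longleftrightarrow> length xs = 2 * n \<and> height xs = 0 \<and>
     (\<forall>i\<le>length xs. height (take i xs) \<ge> 0)"

definition first_rise :: "bool list \<Rightarrow> nat" where
  "first_rise xs = length (takeWhile (\<lambda>s. s) xs)"

definition gen_fine :: "nat \<Rightarrow> int \<Rightarrow> int \<Rightarrow> bool list set" where
  "gen_fine n p q = {xs. dyck_path n xs \<and> (\<exists>k::int. k \<ge> 0 \<and> int (first_rise xs) = k * q + p)}"

end

theory Submission
  imports Defs
begin

text \<open>After its first rise \<open>r \<ge> 1\<close>, a Dyck path of semilength \<open>n\<close> takes a down step and then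
  continues as an arbitrary path of length \<open>2n - r - 1\<close> from height \<open>r - 1\<close> back to \<open>0\<close> that
  never goes below \<open>0\<close>. Paths of length \<open>m\<close> from height \<open>h\<close> with \<open>d\<close> down steps are counted by the
  ballot number \<open>C(m,d) - C(m,d+1)\<close>, as Pascal's rule applied to the first step shows. For
  \<open>h = r - 1\<close> this is the summand, and the first rises allowed in \<open>F\<^sub>n\<^sup>p\<^sup>,\<^sup>q\<close> are
  the distinct values \<open>kq + p \<le> n\<close>.\<close>

fun dyck_tail :: "nat \<Rightarrow> bool list \<Rightarrow> bool" where
  "dyck_tail h [] \<longleftrightarrow> h = 0"
| "dyck_tail h (True # ys) \<longleftrightarrow> dyck_tail (Suc h) ys"
| "dyck_tail h (False # ys) \<longleftrightarrow> h > 0 \<and> dyck_tail (h - 1) ys"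

lemma height_Nil [simp]: "height [] = 0"
  by (simp add: height_def)

lemma height_Cons [simp]: "height (x # xs) = (if x then 1 else -1) + height xs"
  by (simp add: height_def)

lemma all_le_Suc_conv: "(\<forall>i\<le>Suc n. P i) \<longleftrightarrow> P 0 \<and> (\<forall>i\<le>n. P (Suc i))"
  by (metis Suc_le_mono le0 not0_implies_Suc)

lemma dyck_tail_iff_height:
  "dyck_tail h ys \<longleftrightarrow>
     int h + height ys = 0 \<and> (\<forall>i\<le>length ys. int h + height (take i ys) \<ge> 0)"
proof (induction ys arbitrary: h)
  case Nil
  then show ?case by auto
next
  case (Cons x ys)
  then show ?case
    by (cases x) (auto simp: all_le_Suc_conv of_nat_diff algebra_simps)
qed

lemma dyck_path_iff_dyck_tail: "dyck_path n xs \<longleftrightarrow> length xs = 2 * n \<and> dyck_tail 0 xs"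
  by (simp add: dyck_path_def dyck_tail_iff_height)

lemma dyck_tail_replicate_True_append:
  "dyck_tail h (replicate r True @ ys) \<longleftrightarrow> dyck_tail (h + r) ys"
  by (induction r arbitrary: h) auto

lemma dyck_tail_length_ge: "dyck_tail h ys \<Longrightarrow> h \<le> length ys"
  by (induction h ys rule: dyck_tail.induct) auto

definition dyck_tails :: "nat \<Rightarrow> nat \<Rightarrow> bool list set" where
  "dyck_tails h m = {ys. length ys = m \<and> dyck_tail h ys}"

lemma finite_dyck_tails [simp]: "finite (dyck_tails h m)"
  unfolding dyck_tails_def using finite_list_length[of m] by (rule finite_subset[rotated]) auto

lemma dyck_tails_0: "dyck_tails h 0 = (if h = 0 then {[]} else {})"
  by (auto simp: dyck_tails_def)

lemma dyck_tails_Suc: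
  "dyck_tails h (Suc m) =
     Cons True ` dyck_tails (Suc h) m \<union> (if h = 0 then {} else Cons False ` dyck_tails (h - 1) m)"
proof -
  have "ys \<in> dyck_tails h (Suc m) \<longleftrightarrow>
        ys \<in> Cons True ` dyck_tails (Suc h) m \<union>
             (if h = 0 then {} else Cons False ` dyck_tails (h - 1) m)" for ys
  proof (cases ys)
    case (Cons x xs)
    then show ?thesis by (cases x) (auto simp: dyck_tails_def)
  qed (auto simp: dyck_tails_def)
  then show ?thesis by blast
qed

lemma card_dyck_tails_Suc:
  "card (dyck_tails h (Suc m)) =
     card (dyck_tails (Suc h) m) + (if h = 0 then 0 else card (dyck_tails (h - 1) m))"
  unfolding dyck_tails_Suc by (subst card_Un_disjoint) (auto simp: card_image)

theorem card_dyck_tails: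
  assumes "h + m = 2 * d"
  shows "int (card (dyck_tails h m)) = int (m choose d) - int (m choose Suc d)"
  using assms
proof (induction m arbitrary: h d)
  case 0
  then show ?case by (simp add: dyck_tails_0)
next
  case (Suc m)
  obtain e where d: "d = Suc e"
    using Suc.prems by (cases d) auto
  have up: "int (card (dyck_tails (Suc h) m)) = int (m choose d) - int (m choose Suc d)"
    using Suc.IH[of "Suc h" d] Suc.prems by simp
  show ?case
  proof (cases "h = 0")
    case True
    then have "m = 2 * e + 1"
      using Suc.prems d by simp
    then have "m choose e = m choose d"
      using binomial_symmetric[of e m] d by simp
    then show ?thesis
      using True up d by (simp add: card_dyck_tails_Suc)
  next
    case False
    have down: "int (card (dyck_tails (h - 1) m)) = int (m choose e) - int (m choose d)"
      using Suc.IH[of "h - 1" e] Suc.prems False d by simp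
    show ?thesis
      using False up down d by (simp add: card_dyck_tails_Suc)
  qed
qed

lemma first_rise_Nil [simp]: "first_rise [] = 0"
  by (simp add: first_rise_def)

lemma first_rise_Cons [simp]: "first_rise (x # xs) = (if x then Suc (first_rise xs) else 0)"
  by (simp add: first_rise_def)

lemma first_rise_eq_iff:
  "first_rise xs = r \<longleftrightarrow> xs = replicate r True \<or> (\<exists>ys. xs = replicate r True @ False # ys)"
proof (induction r arbitrary: xs)
  case 0
  then show ?case by (cases xs rule: list.exhaust[case_product bool.exhaust]) auto
next
  case (Suc r)
  then show ?case by (cases xs rule: list.exhaust[case_product bool.exhaust]) auto
qed

lemma first_rise_le:
  assumes "dyck_path n xs"
  shows "first_rise xs \<le> n"
proof -
  obtain zs where xs: "xs = replicate (first_rise xs) True @ zs"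
    using first_rise_eq_iff[of xs "first_rise xs"] by auto
  have "dyck_tail (first_rise xs) zs"
    using assms xs dyck_tail_replicate_True_append[of 0] by (metis dyck_path_iff_dyck_tail add_0)
  moreover have "first_rise xs + length zs = 2 * n"
    using assms xs by (metis dyck_path_iff_dyck_tail length_append length_replicate)
  ultimately show ?thesis
    using dyck_tail_length_ge by fastforce
qed

definition dyck_paths_first_rise :: "nat \<Rightarrow> nat \<Rightarrow> bool list set" where
  "dyck_paths_first_rise n r = {xs. dyck_path n xs \<and> first_rise xs = r}"

lemma finite_dyck_paths_first_rise [simp]: "finite (dyck_paths_first_rise n r)"
  unfolding dyck_paths_first_rise_def dyck_path_def
  using finite_list_length[of "2 * n"] by (rule finite_subset[rotated]) auto

lemma dyck_paths_first_rise_0: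
  assumes "n \<ge> 1"
  shows "dyck_paths_first_rise n 0 = {}"
proof -
  have "\<not> dyck_path n xs" if "xs = [] \<or> (\<exists>ys. xs = False # ys)" for xs
    using that assms by (auto simp: dyck_path_iff_dyck_tail)
  then show ?thesis
    by (auto simp: dyck_paths_first_rise_def first_rise_eq_iff)
qed

lemma dyck_path_replicate_True_Cons_False:
  assumes "1 \<le> r" "r \<le> n"
  shows "dyck_path n (replicate r True @ False # ys) \<longleftrightarrow> ys \<in> dyck_tails (r - 1) (2 * n - r - 1)"
  using assms by (auto simp: dyck_path_iff_dyck_tail dyck_tail_replicate_True_append dyck_tails_def)

lemma dyck_paths_first_rise_eq_image:
  assumes "1 \<le> r" "r \<le> n"
  shows "dyck_paths_first_rise n r =
           (\<lambda>ys. replicate r True @ False # ys) ` dyck_tails (r - 1) (2 * n - r - 1)"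
proof -
  have "\<not> dyck_path n (replicate r True)"
    using assms dyck_tail_replicate_True_append[of 0 r "[]"] by (simp add: dyck_path_iff_dyck_tail)
  then show ?thesis
    using dyck_path_replicate_True_Cons_False[OF assms]
    by (auto simp: dyck_paths_first_rise_def first_rise_eq_iff)
qed

lemma card_dyck_paths_first_rise:
  assumes "r \<le> n" "1 \<le> n"
  shows "int (card (dyck_paths_first_rise n r)) =
           int ((2 * n - r - 1) choose (n - 1)) - int ((2 * n - r - 1) choose n)"
proof (cases "r = 0")
  case True
  have "(2 * n - 1) choose (n - 1) = (2 * n - 1) choose n"
    using binomial_symmetric[of "n - 1" "2 * n - 1"] assms by simp
  then show ?thesis
    using True assms by (simp add: dyck_paths_first_rise_0)
next
  case False
  have "card (dyck_paths_first_rise n r) = card (dyck_tails (r - 1) (2 * n - r - 1))"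
    using False assms
    by (simp add: dyck_paths_first_rise_eq_image card_image inj_on_def)
  also have "int \<dots> = int ((2 * n - r - 1) choose (n - 1)) - int ((2 * n - r - 1) choose Suc (n - 1))"
    by (rule card_dyck_tails) (use False assms in simp)
  finally show ?thesis
    using assms by simp
qed

lemma card_dyck_paths_first_rise_in:
  assumes "finite R"
  shows "card {xs. dyck_path n xs \<and> first_rise xs \<in> R} = (\<Sum>r\<in>R. card (dyck_paths_first_rise n r))"
proof -
  have "{xs. dyck_path n xs \<and> first_rise xs \<in> R} = (\<Union>r\<in>R. dyck_paths_first_rise n r)"
    by (auto simp: dyck_paths_first_rise_def)
  also have "card \<dots> = (\<Sum>r\<in>R. card (dyck_paths_first_rise n r))"
    using assms by (intro card_UN_disjoint ballI finite_dyck_paths_first_rise)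
      (auto simp: dyck_paths_first_rise_def)
  finally show ?thesis .
qed

lemma le_floor_divide_iff:
  fixes k a q :: int
  assumes "0 < q"
  shows "k \<le> \<lfloor>real_of_int a / real_of_int q\<rfloor> \<longleftrightarrow> k * q \<le> a"
proof -
  have "k \<le> \<lfloor>real_of_int a / real_of_int q\<rfloor> \<longleftrightarrow> real_of_int k * real_of_int q \<le> real_of_int a"
    using assms by (simp add: le_floor_iff pos_le_divide_eq)
  also have "\<dots> \<longleftrightarrow> k * q \<le> a"
    by (metis of_int_le_iff of_int_mult)
  finally show ?thesis .
qed

lemma gen_fine_eq_first_rise_in:
  assumes "0 \<le> p" "0 < q"
  shows "gen_fine n p q =
           {xs. dyck_path n xs \<and> first_rise xs \<in> (\<lambda>k. nat (k * q + p)) ` {k. 0 \<le> k \<and> k * q + p \<le> int n}}"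
    (is "_ = ?F")
proof (intro set_eqI iffI)
  fix xs
  assume "xs \<in> gen_fine n p q"
  then obtain k where k: "dyck_path n xs" "0 \<le> k" "int (first_rise xs) = k * q + p"
    by (auto simp: gen_fine_def)
  moreover have "first_rise xs = nat (k * q + p)"
    using k(3) by (metis nat_int)
  moreover have "k * q + p \<le> int n"
    using k first_rise_le[OF k(1)] by linarith
  ultimately show "xs \<in> ?F"
    by blast
qed (use assms in \<open>auto simp: gen_fine_def\<close>)

lemma inj_on_nat_affine:
  fixes p q :: int
  assumes "0 \<le> p" "0 < q"
  shows "inj_on (\<lambda>k. nat (k * q + p)) {k. 0 \<le> k}"
proof (rule inj_onI)
  fix x y
  assume "x \<in> {k. 0 \<le> k}" "y \<in> {k. 0 \<le> k}" "nat (x * q + p) = nat (y * q + p)"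
  moreover have "0 \<le> x * q" "0 \<le> y * q"
    using calculation assms by simp_all
  ultimately have "x * q = y * q"
    using assms by (simp add: eq_nat_nat_iff)
  then show "x = y"
    using assms by simp
qed

theorem mainTheorem1:
  fixes p q :: int and n :: nat
  assumes "0 \<le> p" and "p < q" and "n \<ge> 1"
  shows "int (card (gen_fine n p q)) =
    (\<Sum>k\<in>{0..\<lfloor>real_of_int (int n - p) / real_of_int q\<rfloor>}.
       int ((2 * n - nat (k * q + p) - 1) choose (n - 1))
       - int ((2 * n - nat (k * q + p) - 1) choose n))"
proof -
  let ?K = "{0..\<lfloor>real_of_int (int n - p) / real_of_int q\<rfloor>}"
  let ?rise = "\<lambda>k. nat (k * q + p)"
  have q: "0 < q"
    using assms by simp
  have K: "?K = {k. 0 \<le> k \<and> k * q + p \<le> int n}"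
    using le_floor_divide_iff[OF q, of _ "int n - p"] by auto
  have inj: "inj_on ?rise ?K"
    using inj_on_nat_affine[OF assms(1) q] by (rule inj_on_subset) auto
  have "card (gen_fine n p q) = card {xs. dyck_path n xs \<and> first_rise xs \<in> ?rise ` ?K}"
    by (simp only: K gen_fine_eq_first_rise_in[OF assms(1) q])
  also have "\<dots> = (\<Sum>r\<in>?rise ` ?K. card (dyck_paths_first_rise n r))"
    by (rule card_dyck_paths_first_rise_in) simp
  also have "\<dots> = (\<Sum>k\<in>?K. card (dyck_paths_first_rise n (?rise k)))"
    by (simp only: sum.reindex[OF inj] o_def)
  finally have "card (gen_fine n p q) = (\<Sum>k\<in>?K. card (dyck_paths_first_rise n (?rise k)))" .
  moreover have "?rise k \<le> n" if "k \<in> ?K" for k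
    using that unfolding K by auto
  ultimately show ?thesis
    using assms(3) by (simp add: card_dyck_paths_first_rise)
qed

end
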